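(* A skew-convex function $f\colon X\to K$ is skew invertible if and only if $f(X)\subseteq K^*$ and for every $x\in X$ there exists $a\in K^*$ such that $f({}^{a}x)=a^{-1}$.
   Context: Let $K$ be a skew field, $K^*=K\setminus\{0\}$, and $X$ a nonempty set with a left $K^*$-action $(a,x)\mapsto{}^{a}x$. $\mathcal F(X)$ is the set of functions $X\to K$ with pointwise addition; the constant function with value $a\in K$ is denoted $a$. The skew product is $(f\diamond g)(x)=f({}^{g(x)}x)\,g(x)$ if $g(x)\neq0$ and $0$ if $g(x)=0$. A function $f$ is skew convex if $f\diamond(a+b)=f\diamond a+f\diamond b$ for all $a,b\in K$. $f$ is skew invertible if there is $g\in\mathcal F(X)$ with $f\diamond g=g\diamond f=1$. *)

theory Defs
  imports Main
begin

text \<open>A skew field K is modelled by a type of class division_ring; the set X by a type 'x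
(types are nonempty). A left action of the multiplicative group K* on X is a function
act :: 'k => 'x => 'x whose values at a = 0 are irrelevant.\<close>

definition left_action :: "('k::division_ring \<Rightarrow> 'x \<Rightarrow> 'x) \<Rightarrow> bool" where
  "left_action act \<longleftrightarrow>
     (\<forall>x. act 1 x = x) \<and>
     (\<forall>a b x. a \<noteq> 0 \<longrightarrow> b \<noteq> 0 \<longrightarrow> act (a * b) x = act a (act b x))"

definition skew_prod ::
  "('k::division_ring \<Rightarrow> 'x \<Rightarrow> 'x) \<Rightarrow> ('x \<Rightarrow> 'k) \<Rightarrow> ('x \<Rightarrow> 'k) \<Rightarrow> 'x \<Rightarrow> 'k" where
  "skew_prod act f g = (\<lambda>x. if g x = 0 then 0 else f (act (g x) x) * g x)"

definition skew_convex :: "('k::division_ring \<Rightarrow> 'x \<Rightarrow> 'x) \<Rightarrow> ('x \<Rightarrow> 'k) \<Rightarrow> bool" where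
  "skew_convex act f \<longleftrightarrow>
     (\<forall>a b. skew_prod act f (\<lambda>_. a + b) =
            (\<lambda>x. skew_prod act f (\<lambda>_. a) x + skew_prod act f (\<lambda>_. b) x))"

definition skew_invertible :: "('k::division_ring \<Rightarrow> 'x \<Rightarrow> 'x) \<Rightarrow> ('x \<Rightarrow> 'k) \<Rightarrow> bool" where
  "skew_invertible act f \<longleftrightarrow>
     (\<exists>g. skew_prod act f g = (\<lambda>_. 1) \<and> skew_prod act g f = (\<lambda>_. 1))"

end

theory Submission
  imports Defs
begin

(* Evaluated at a point x, f <> g = 1 says exactly that a = g x is a nonzero solution of
   f(a.x) = a^-1, so f has a right skew inverse iff every x admits such an a.  Skew convexity makes
   a |-> (f <> a)(x) additive, and since f does not vanish its kernel is trivial, so that solution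
   is unique.  The left inverse condition g <> f = 1 at x asks g(f(x).x) = f(x)^-1; and f(x)^-1 is
   a solution at f(x).x because the action of f(x)^-1 undoes that of f(x), so uniqueness gives it. *)

lemma skew_prod_eq_1_iff:
  "skew_prod act f g x = 1 \<longleftrightarrow> g x \<noteq> 0 \<and> f (act (g x) x) = inverse (g x)"
  (is "?l \<longleftrightarrow> ?r")
proof
  assume ?l
  then have "g x \<noteq> 0" and "f (act (g x) x) * g x = 1"
    by (auto simp: skew_prod_def split: if_splits)
  then show ?r
    by (metis inverse_unique inverse_inverse_eq)
next
  assume ?r
  then show ?l by (simp add: skew_prod_def)
qed

lemma left_action_inverse_cancel:
  assumes "left_action act" and "a \<noteq> 0"
  shows "act (inverse a) (act a x) = x"
  using assms unfolding left_action_def by (metis inverse_nonzero_iff_nonzero left_inverse)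

lemma skew_convex_const_add:
  assumes "skew_convex act f"
  shows "skew_prod act f (\<lambda>_. a + b) x = skew_prod act f (\<lambda>_. a) x + skew_prod act f (\<lambda>_. b) x"
  using assms unfolding skew_convex_def by metis

lemma skew_prod_const_eq_0_iff:
  assumes "\<forall>x. f x \<noteq> 0"
  shows "skew_prod act f (\<lambda>_. a) x = 0 \<longleftrightarrow> a = 0"
  using assms by (simp add: skew_prod_def)

lemma skew_convex_inverse_fixpoint_unique:
  assumes "skew_convex act f" and "\<forall>x. f x \<noteq> 0"
    and "a \<noteq> 0" "f (act a x) = inverse a"
    and "b \<noteq> 0" "f (act b x) = inverse b"
  shows "a = b"
proof -
  have "skew_prod act f (\<lambda>_. a) x = 1" "skew_prod act f (\<lambda>_. b) x = 1"
    using assms(3-6) by (simp_all add: skew_prod_eq_1_iff)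
  moreover have "skew_prod act f (\<lambda>_. a) x =
      skew_prod act f (\<lambda>_. b) x + skew_prod act f (\<lambda>_. a - b) x"
    using skew_convex_const_add[OF assms(1), of b "a - b"] by simp
  ultimately have "skew_prod act f (\<lambda>_. a - b) x = 0" by simp
  then show "a = b"
    using skew_prod_const_eq_0_iff[OF assms(2)] by simp
qed

lemma skew_invertible_imp_nonzero:
  assumes "skew_invertible act f"
  shows "f x \<noteq> 0"
proof -
  from assms obtain g where "skew_prod act g f = (\<lambda>_. 1)"
    unfolding skew_invertible_def by blast
  then show ?thesis
    by (simp add: fun_eq_iff skew_prod_eq_1_iff)
qed

lemma skew_invertible_imp_inverse_fixpoint:
  assumes "skew_invertible act f"
  shows "\<exists>a. a \<noteq> 0 \<and> f (act a x) = inverse a"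
proof -
  from assms obtain g where "skew_prod act f g = (\<lambda>_. 1)"
    unfolding skew_invertible_def by blast
  then have "g x \<noteq> 0 \<and> f (act (g x) x) = inverse (g x)"
    by (simp add: fun_eq_iff skew_prod_eq_1_iff)
  then show ?thesis by blast
qed

lemma skew_invertibleI:
  assumes "left_action act" and "skew_convex act f" and nonzero: "\<forall>x. f x \<noteq> 0"
    and solvable: "\<forall>x. \<exists>a. a \<noteq> 0 \<and> f (act a x) = inverse a"
  shows "skew_invertible act f"
proof -
  define g where "g x = (SOME a. a \<noteq> 0 \<and> f (act a x) = inverse a)" for x
  have g: "g x \<noteq> 0 \<and> f (act (g x) x) = inverse (g x)" for x
    unfolding g_def using solvable[rule_format, of x] by (rule someI_ex)
  have "skew_prod act f g = (\<lambda>_. 1)"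
    using g by (simp add: fun_eq_iff skew_prod_eq_1_iff)
  moreover have "skew_prod act g f = (\<lambda>_. 1)"
  proof (rule ext)
    fix x
    have fx: "f x \<noteq> 0" using nonzero by blast
    let ?y = "act (f x) x"
    have "f (act (inverse (f x)) ?y) = inverse (inverse (f x))"
      using left_action_inverse_cancel[OF assms(1) fx] by simp
    then have "g ?y = inverse (f x)"
      using skew_convex_inverse_fixpoint_unique[OF assms(2) nonzero, of "g ?y" ?y "inverse (f x)"]
        g[of ?y] fx by simp
    then show "skew_prod act g f x = 1"
      using fx by (simp add: skew_prod_eq_1_iff)
  qed
  ultimately show ?thesis
    unfolding skew_invertible_def by blast
qed

theorem proposition2p10:
  fixes act :: "'k::division_ring \<Rightarrow> 'x \<Rightarrow> 'x" and f :: "'x \<Rightarrow> 'k"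
  assumes "left_action act"
    and "skew_convex act f"
  shows "skew_invertible act f \<longleftrightarrow>
           ((\<forall>x. f x \<noteq> 0) \<and> (\<forall>x. \<exists>a. a \<noteq> 0 \<and> f (act a x) = inverse a))"
proof
  assume inv: "skew_invertible act f"
  show "(\<forall>x. f x \<noteq> 0) \<and> (\<forall>x. \<exists>a. a \<noteq> 0 \<and> f (act a x) = inverse a)"
    using skew_invertible_imp_nonzero[OF inv] skew_invertible_imp_inverse_fixpoint[OF inv]
    by blast
next
  assume "(\<forall>x. f x \<noteq> 0) \<and> (\<forall>x. \<exists>a. a \<noteq> 0 \<and> f (act a x) = inverse a)"
  then show "skew_invertible act f"
    by (elim conjE) (rule skew_invertibleI[OF assms])
qed

end
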